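(* Let $s\in\mathbb{C}$ with $\sigma=\operatorname{Re}s>1$, let $\beta\ne0$ be complex and $n_0>1+|\beta|$ an integer. With $\gamma_{k_0}=\big|1+\frac{s-1}{k_0+1}\big|$, let $k_0$ be a positive integer such that $\gamma_{k_0}<\frac{n_0-1}{|\beta|}$. Let $\mathcal{D}_{n_0}\in\{\mathcal{X}_{n_0},\mathcal{Y}_{n_0},\mathcal{Z}_{n_0}\}$. Then $$\Big|\sum_{k\ge k_0}\binom{-s}{k}\beta^k\mathcal{D}_{n_0}(s+k)\Big|\le\frac{2|\beta|^{k_0}(n_0-1)^{3-\sigma-k_0}}{(\sigma+k_0-2)(n_0-1-\gamma_{k_0}|\beta|)}\Big|\binom{-s}{k_0}\Big|.$$
   Context: Pascal's rhombus consists of integers $r_{i,j}$ for $i\ge0$, $j\in\mathbb{Z}$, with $r_{0,j}=0$ for all $j$, $r_{1,0}=1$, $r_{1,j}=0$ for $j\ne0$, and $r_{i,j}=r_{i-1,j-1}+r_{i-1,j}+r_{i-1,j+1}+r_{i-2,j}$ for $i\ge2$. For $n\ge1$: $x(n)$ is the number of $j$ with $r_{n,j}$ odd; $y(n)$ the number of $j$ with $r_{2n-1,2j}$ odd; $z(n)$ the number of $j$ with $r_{2n,2j-1}$ odd. $\mathcal{X}_{n_0}(s)=\sum_{n\ge n_0}x(n)n^{-s}$, $\mathcal{Y}_{n_0}(s)=\sum_{n\ge n_0}y(n)n^{-s}$, $\mathcal{Z}_{n_0}(s)=\sum_{n\ge n_0}z(n)n^{-s}$. *)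

theory Defs
  imports "HOL-Analysis.Analysis"
begin

text \<open>Pascal's rhombus r(i,j), i \<ge> 0, j integer.\<close>
fun rh :: "nat \<Rightarrow> int \<Rightarrow> int" where
  "rh 0 j = 0"
| "rh (Suc 0) j = (if j = 0 then 1 else 0)"
| "rh (Suc (Suc i)) j = rh (Suc i) (j - 1) + rh (Suc i) j + rh (Suc i) (j + 1) + rh i j"

definition rx :: "nat \<Rightarrow> nat" where
  "rx n = card {j::int. odd (rh n j)}"

definition ry :: "nat \<Rightarrow> nat" where
  "ry n = card {j::int. odd (rh (2 * n - 1) (2 * j))}"

definition rz :: "nat \<Rightarrow> nat" where
  "rz n = card {j::int. odd (rh (2 * n) (2 * j - 1))}"

definition dser :: "(nat \<Rightarrow> nat) \<Rightarrow> nat \<Rightarrow> complex \<Rightarrow> complex" where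
  "dser d n0 s = (\<Sum>n. of_nat (d (n + n0)) * (of_nat (n + n0)) powr (- s))"

end

theory Submission imports Defs begin

text \<open>Row n of Pascal's rhombus vanishes outside the open interval (-n, n), so each of x(n), y(n), z(n)
  is at most 2n. Comparing the sum with an integral (via the mean value theorem) then gives
  |D(z)| \<le> 2 (n0-1)^(2 - Re z) / (Re z - 2) for Re z > 2. The binomial coefficients satisfy
  |C(-s, k+1)| = |C(-s, k)| |1 + (s-1)/(k+1)|, and these ratios decrease to 1, so from k0 on the
  series is dominated by a geometric series with ratio \<gamma>(k0) |\<beta>| / (n0-1) < 1.\<close>

lemma rh_eq_0_if_le_abs: "int n \<le> \<bar>j\<bar> \<Longrightarrow> rh n j = 0"
  by (induction n j rule: rh.induct) auto

lemma abs_less_if_odd_rh: "odd (rh n j) \<Longrightarrow> \<bar>j\<bar> < int n"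
  by (rule ccontr) (simp add: rh_eq_0_if_le_abs)

lemma card_le_if_subset_atLeastAtMost_int:
  "A \<subseteq> {a..b::int} \<Longrightarrow> card A \<le> nat (b - a + 1)"
  using card_mono[OF finite_atLeastAtMost_int] by fastforce

lemma rx_le: "n \<ge> 1 \<Longrightarrow> rx n \<le> 2 * n"
proof -
  assume "n \<ge> 1"
  have "{j. odd (rh n j)} \<subseteq> {- (int n - 1)..int n - 1}"
    using abs_less_if_odd_rh by fastforce
  from card_le_if_subset_atLeastAtMost_int[OF this] \<open>n \<ge> 1\<close> show ?thesis
    unfolding rx_def by simp
qed

lemma ry_le: "n \<ge> 1 \<Longrightarrow> ry n \<le> 2 * n"
proof -
  assume "n \<ge> 1"
  have "{j. odd (rh (2 * n - 1) (2 * j))} \<subseteq> {- (int n - 1)..int n - 1}"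
    using abs_less_if_odd_rh \<open>n \<ge> 1\<close> by fastforce
  from card_le_if_subset_atLeastAtMost_int[OF this] \<open>n \<ge> 1\<close> show ?thesis
    unfolding ry_def by simp
qed

lemma rz_le: "n \<ge> 1 \<Longrightarrow> rz n \<le> 2 * n"
proof -
  assume "n \<ge> 1"
  have "{j. odd (rh (2 * n) (2 * j - 1))} \<subseteq> {- (int n - 1)..int n}"
    using abs_less_if_odd_rh \<open>n \<ge> 1\<close> by fastforce
  from card_le_if_subset_atLeastAtMost_int[OF this] \<open>n \<ge> 1\<close> show ?thesis
    unfolding rz_def by simp
qed

lemma powr_le_powr_diff_div:
  fixes a x :: real
  assumes "a > 2" "x > 1"
  shows "x powr (1 - a) \<le> ((x - 1) powr (2 - a) - x powr (2 - a)) / (a - 2)"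
proof -
  have deriv: "((\<lambda>t. t powr (2 - a)) has_real_derivative (2 - a) * t powr (2 - a - 1)) (at t)"
    if "x - 1 \<le> t" for t
    using assms that by (intro has_real_derivative_powr) auto
  obtain z where z: "x - 1 < z" "z < x"
    and mvt: "x powr (2 - a) - (x - 1) powr (2 - a) = (x - (x - 1)) * ((2 - a) * z powr (2 - a - 1))"
    using MVT2[of "x - 1" x "\<lambda>t. t powr (2 - a)" "\<lambda>t. (2 - a) * t powr (2 - a - 1)"] deriv by auto
  have "x powr (1 - a) \<le> z powr (1 - a)"
    using z assms by (intro powr_mono2') auto
  also have "z powr (1 - a) = ((x - 1) powr (2 - a) - x powr (2 - a)) / (a - 2)"
    using mvt assms by (simp add: field_simps)
  finally show ?thesis .
qed

lemma norm_dser_le_if_linear_bound: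
  fixes d :: "nat \<Rightarrow> nat" and c :: real and z :: complex
  assumes lin: "\<And>n. n \<ge> n0 \<Longrightarrow> real (d n) \<le> c * real n"
    and "n0 \<ge> 2" and "Re z > 2"
  shows "norm (dser d n0 z) \<le> c * (real n0 - 1) powr (2 - Re z) / (Re z - 2)"
proof -
  define a where "a = Re z"
  define g where "g n = c * (real (n + n0) - 1) powr (2 - a) / (a - 2)" for n
  have "a > 2" using assms a_def by simp
  have "0 \<le> c * real n0"
    using lin[of n0] of_nat_0_le_iff order_trans by blast
  then have "c \<ge> 0"
    using \<open>n0 \<ge> 2\<close> by (simp add: zero_le_mult_iff)
  have "filterlim (\<lambda>n. (real n0 - 1) + real n) at_top sequentially"
    by (rule filterlim_tendsto_add_at_top[OF tendsto_const filterlim_real_sequentially])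
  then have "filterlim (\<lambda>n. real (n + n0) - 1) at_top sequentially"
    by (simp add: algebra_simps)
  then have "(\<lambda>n. (real (n + n0) - 1) powr (2 - a)) \<longlonglongrightarrow> 0"
    using \<open>a > 2\<close> by (intro tendsto_neg_powr) auto
  from tendsto_mult[OF tendsto_const[of c] tendsto_divide[OF this tendsto_const[of "a - 2"]]]
  have "g \<longlonglongrightarrow> 0"
    using \<open>a > 2\<close> unfolding g_def by simp
  then have telescope: "(\<lambda>n. g n - g (Suc n)) sums g 0"
    using telescope_sums' by fastforce
  have term_le: "norm (of_nat (d (n + n0)) * of_nat (n + n0) powr (- z)) \<le> g n - g (Suc n)" for n
  proof -
    define m where "m = n + n0"
    have "m \<ge> 2" using assms m_def by simp
    have "norm (of_nat (d m) * (of_nat m :: complex) powr (- z)) = real (d m) * real m powr (- a)"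
      by (simp add: norm_mult norm_powr_real_powr a_def)
    also have "\<dots> \<le> c * real m * real m powr (- a)"
      using lin[of m] m_def by (intro mult_right_mono) auto
    also have "\<dots> = c * real m powr (1 - a)"
      using \<open>m \<ge> 2\<close> by (simp add: powr_diff powr_minus field_simps)
    also have "\<dots> \<le> c * (((real m - 1) powr (2 - a) - real m powr (2 - a)) / (a - 2))"
      using powr_le_powr_diff_div[OF \<open>a > 2\<close>, of "real m"] \<open>m \<ge> 2\<close> \<open>c \<ge> 0\<close>
      by (intro mult_left_mono) auto
    also have "\<dots> = g n - g (Suc n)"
      unfolding g_def m_def by (simp add: diff_divide_distrib right_diff_distrib)
    finally show ?thesis unfolding m_def .
  qed
  have "norm (dser d n0 z) \<le> (\<Sum>n. g n - g (Suc n))"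
    unfolding dser_def by (rule norm_suminf_le[OF term_le sums_summable[OF telescope]])
  also have "\<dots> = g 0"
    using telescope sums_unique by metis
  finally show ?thesis
    unfolding g_def a_def by simp
qed

lemma norm_dser_shift_le:
  fixes s :: complex
  assumes "d \<in> {rx, ry, rz}" and "n0 \<ge> 2" and "Re s + real k0 > 2"
  shows "norm (dser d n0 (s + of_nat (k + k0)))
    \<le> 2 * (real n0 - 1) powr (3 - Re s - real k0) / (Re s + real k0 - 2) / (real n0 - 1) ^ Suc k"
proof -
  define N where "N = real n0 - 1"
  have "N > 0" using assms N_def by simp
  have "real (d n) \<le> 2 * real n" if "n \<ge> n0" for n
    using assms rx_le[of n] ry_le[of n] rz_le[of n] that by auto
  then have "norm (dser d n0 (s + of_nat (k + k0)))
      \<le> 2 * N powr (2 - Re s - real (k + k0)) / (Re s + real (k + k0) - 2)"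
    using norm_dser_le_if_linear_bound[of n0 d 2 "s + of_nat (k + k0)"] assms
    unfolding N_def by (simp add: algebra_simps)
  also have "\<dots> \<le> 2 * N powr (2 - Re s - real (k + k0)) / (Re s + real k0 - 2)"
    using assms by (intro divide_left_mono) auto
  also have "N powr (2 - Re s - real (k + k0)) = N powr (3 - Re s - real k0) / N ^ Suc k"
    using \<open>N > 0\<close> powr_diff[of N "3 - Re s - real k0" "real (Suc k)"] powr_realpow[of N "Suc k"]
    by (simp add: algebra_simps)
  finally show ?thesis
    unfolding N_def by (simp add: mult.commute)
qed

lemma norm_gbinomial_neg_Suc:
  fixes s :: complex
  shows "norm ((- s) gchoose Suc m) = norm ((- s) gchoose m) * norm (1 + (s - 1) / of_nat (Suc m))"
proof -
  have "of_nat (Suc m) * ((- s) gchoose Suc m) = (- s - of_nat m) * ((- s) gchoose m)"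
    using gbinomial_mult_1[of "- s" m] by (simp add: algebra_simps)
  also have "- s - of_nat m = - (of_nat (Suc m) * (1 + (s - 1) / of_nat (Suc m)))"
    by (simp add: field_simps del: of_nat_Suc) (simp add: algebra_simps)
  finally have "of_nat (Suc m) * ((- s) gchoose Suc m)
      = of_nat (Suc m) * - (((- s) gchoose m) * (1 + (s - 1) / of_nat (Suc m)))"
    by (simp add: algebra_simps)
  then have "(- s) gchoose Suc m = - (((- s) gchoose m) * (1 + (s - 1) / of_nat (Suc m)))"
    using mult_cancel_left of_nat_eq_0_iff nat.distinct(1) by metis
  then show ?thesis
    by (simp add: norm_mult)
qed

lemma norm_one_plus_div_antimono:
  fixes s :: complex
  assumes "Re s \<ge> 1" and "k0 \<le> m"
  shows "norm (1 + (s - 1) / of_nat (m + 1)) \<le> norm (1 + (s - 1) / of_nat (k0 + 1))"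
proof -
  have norm_eq: "norm (1 + (s - 1) / of_nat (j + 1))
      = sqrt ((1 + (Re s - 1) / (real j + 1))\<^sup>2 + (Im s / (real j + 1))\<^sup>2)" for j
    by (simp add: cmod_def add.commute)
  have im: "(Im s / (real m + 1))\<^sup>2 \<le> (Im s / (real k0 + 1))\<^sup>2"
    using assms by (simp add: power_divide divide_left_mono)
  have "1 + (Re s - 1) / (real m + 1) \<le> 1 + (Re s - 1) / (real k0 + 1)"
    using assms by (intro add_left_mono divide_left_mono) auto
  then have re: "(1 + (Re s - 1) / (real m + 1))\<^sup>2 \<le> (1 + (Re s - 1) / (real k0 + 1))\<^sup>2"
    using assms by (intro power_mono) auto
  show ?thesis
    unfolding norm_eq by (intro real_sqrt_le_mono add_mono re im)
qed

lemma norm_gbinomial_neg_add_le: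
  fixes s :: complex
  assumes "Re s \<ge> 1"
  shows "norm ((- s) gchoose (k + k0)) \<le> norm ((- s) gchoose k0) * norm (1 + (s - 1) / of_nat (k0 + 1)) ^ k"
proof (induction k)
  case 0
  then show ?case by simp
next
  case (Suc k)
  have "norm ((- s) gchoose (Suc k + k0))
      = norm ((- s) gchoose (k + k0)) * norm (1 + (s - 1) / of_nat (k + k0 + 1))"
    using norm_gbinomial_neg_Suc[of s "k + k0"] by simp
  also have "\<dots> \<le> norm ((- s) gchoose k0) * norm (1 + (s - 1) / of_nat (k0 + 1)) ^ k
      * norm (1 + (s - 1) / of_nat (k0 + 1))"
    using Suc norm_one_plus_div_antimono[OF assms, of k0 "k + k0"] by (intro mult_mono) auto
  finally show ?case by (simp add: algebra_simps)
qed

lemma summable_and_norm_suminf_le_geometric: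
  fixes f :: "nat \<Rightarrow> 'a::banach"
  assumes "\<And>k. norm (f k) \<le> C * q ^ k" and "0 \<le> q" and "q < 1"
  shows "summable f \<and> norm (suminf f) \<le> C / (1 - q)"
proof -
  have geometric: "(\<lambda>k. C * q ^ k) sums (C / (1 - q))"
    using assms sums_mult[OF geometric_sums, of q C] by (simp add: divide_inverse)
  have "summable f"
    by (rule summable_comparison_test'[OF sums_summable[OF geometric] assms(1)])
  moreover have "norm (suminf f) \<le> C / (1 - q)"
    using norm_suminf_le[OF assms(1) sums_summable[OF geometric]] sums_unique[OF geometric] by simp
  ultimately show ?thesis ..
qed

lemma divide_mult_divide_one_minus:
  fixes X D N a :: "'a::field"
  assumes "N \<noteq> 0"
  shows "X / (D * N) / (1 - a / N) = X / (D * (N - a))"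
proof -
  have "1 - a / N = (N - a) / N"
    using assms by (simp add: diff_divide_distrib)
  then show ?thesis
    using assms by simp
qed

lemma norm_tail_term_le:
  fixes s \<beta> :: complex
  assumes "Re s \<ge> 1" and "d \<in> {rx, ry, rz}" and "n0 \<ge> 2" and "Re s + real k0 > 2"
  shows "norm (((- s) gchoose (k + k0)) * \<beta> ^ (k + k0) * dser d n0 (s + of_nat (k + k0)))
    \<le> 2 * norm ((- s) gchoose k0) * norm \<beta> ^ k0 * (real n0 - 1) powr (3 - Re s - real k0)
        / ((Re s + real k0 - 2) * (real n0 - 1))
      * (norm (1 + (s - 1) / of_nat (k0 + 1)) * norm \<beta> / (real n0 - 1)) ^ k"
proof -
  have "norm (((- s) gchoose (k + k0)) * \<beta> ^ (k + k0) * dser d n0 (s + of_nat (k + k0)))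
      \<le> (norm ((- s) gchoose k0) * norm (1 + (s - 1) / of_nat (k0 + 1)) ^ k) * norm \<beta> ^ (k + k0)
        * (2 * (real n0 - 1) powr (3 - Re s - real k0) / (Re s + real k0 - 2) / (real n0 - 1) ^ Suc k)"
    unfolding norm_mult norm_power using assms
    by (intro mult_mono norm_gbinomial_neg_add_le norm_dser_shift_le) auto
  also have "\<dots> = 2 * norm ((- s) gchoose k0) * norm \<beta> ^ k0 * (real n0 - 1) powr (3 - Re s - real k0)
        / ((Re s + real k0 - 2) * (real n0 - 1))
      * (norm (1 + (s - 1) / of_nat (k0 + 1)) * norm \<beta> / (real n0 - 1)) ^ k"
    using assms by (simp add: power_add power_divide power_mult_distrib field_simps)
  finally show ?thesis .
qed

theorem lemmaI4:
  fixes s \<beta> :: complex and n0 k0 :: nat and d :: "nat \<Rightarrow> nat"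
  assumes "Re s > 1"
    and "\<beta> \<noteq> 0"
    and "real n0 > 1 + norm \<beta>"
    and "k0 > 0"
    and "norm (1 + (s - 1) / of_nat (k0 + 1)) < (real n0 - 1) / norm \<beta>"
    and "d \<in> {rx, ry, rz}"
  shows "summable (\<lambda>k. ((- s) gchoose (k + k0)) * \<beta> ^ (k + k0) * dser d n0 (s + of_nat (k + k0)))
    \<and> norm (\<Sum>k. ((- s) gchoose (k + k0)) * \<beta> ^ (k + k0) * dser d n0 (s + of_nat (k + k0)))
      \<le> 2 * norm \<beta> ^ k0 * (real n0 - 1) powr (3 - Re s - real k0)
         / ((Re s + real k0 - 2) * (real n0 - 1 - norm (1 + (s - 1) / of_nat (k0 + 1)) * norm \<beta>))
         * norm ((- s) gchoose k0)"
proof -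
  define N where "N = real n0 - 1"
  define \<gamma> where "\<gamma> = norm (1 + (s - 1) / of_nat (k0 + 1))"
  have "norm \<beta> > 0" "N > norm \<beta>" "Re s + real k0 > 2"
    using assms unfolding N_def by auto
  then have "N > 0" "N \<noteq> 0" "n0 \<ge> 2"
    unfolding N_def by linarith+
  have "\<gamma> * norm \<beta> < N"
    using assms(5) \<open>norm \<beta> > 0\<close> unfolding \<gamma>_def N_def by (simp add: pos_less_divide_eq)
  then have ratio_less_1: "\<gamma> * norm \<beta> / N < 1"
    using \<open>N > 0\<close> by simp
  have "summable (\<lambda>k. ((- s) gchoose (k + k0)) * \<beta> ^ (k + k0) * dser d n0 (s + of_nat (k + k0)))
    \<and> norm (\<Sum>k. ((- s) gchoose (k + k0)) * \<beta> ^ (k + k0) * dser d n0 (s + of_nat (k + k0)))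
      \<le> 2 * norm ((- s) gchoose k0) * norm \<beta> ^ k0 * N powr (3 - Re s - real k0)
          / ((Re s + real k0 - 2) * N) / (1 - \<gamma> * norm \<beta> / N)"
    using assms \<open>n0 \<ge> 2\<close> \<open>Re s + real k0 > 2\<close> ratio_less_1 unfolding N_def \<gamma>_def
    by (intro summable_and_norm_suminf_le_geometric norm_tail_term_le) auto
  moreover have "2 * norm ((- s) gchoose k0) * norm \<beta> ^ k0 * N powr (3 - Re s - real k0)
          / ((Re s + real k0 - 2) * N) / (1 - \<gamma> * norm \<beta> / N)
      = 2 * norm \<beta> ^ k0 * N powr (3 - Re s - real k0)
          / ((Re s + real k0 - 2) * (N - \<gamma> * norm \<beta>)) * norm ((- s) gchoose k0)"
    unfolding divide_mult_divide_one_minus[OF \<open>N \<noteq> 0\<close>] by (simp add: mult_ac)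
  ultimately show ?thesis
    unfolding N_def \<gamma>_def by simp
qed

end
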